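(* Let $m,n$ be positive integers and let $\Pi$ be an $(m,n)$-Dyck path. For a north step $N$ of $\Pi$ going from $(a,b)$ to $(a,b+1)$, define its rational diagonal \[ D(N)=\{(u,v)\in\mathbb{R}^2:\ u<a,\ \ mb-na< mv-nu\le m(b+1)-na\}, \] i.e. the region to the left of $N$ lying between the two lines of slope $n/m$ through the endpoints of $N$, including the upper line but not the lower one. Then $\operatorname{pdinv}(\Pi)$ equals the number of pairs $(N,E)$, where $N$ is a north step and $E$ is an east step of $\Pi$, such that the (closed) segment $E$ has a point in $D(N)$.
   Context: An $(m,n)$-Dyck path is a lattice path from $(0,0)$ to $(m,n)$ consisting of unit north and east steps that stays weakly above the line $y=\frac{n}{m}x$. Let $\lambda(\Pi)$ be the set of unit cells of the rectangle $[0,m]\times[0,n]$ lying above (northwest of) $\Pi$; for $c\in\lambda(\Pi)$, $\operatorname{arm}(c)$ (resp. $\operatorname{leg}(c)$) is the number of cells of $\lambda(\Pi)$ strictly east of $c$ in its row (resp. strictly south of $c$ in its column). The path dinv is \[ \operatorname{pdinv}(\Pi)=\sum_{c\in\lambda(\Pi)}\chi\left(\frac{\operatorname{arm}(c)}{\operatorname{leg}(c)+1}\le\frac{m}{n}<\frac{\operatorname{arm}(c)+1}{\operatorname{leg}(c)}\right), \] with the convention $x/0=\infty$, and $\chi(P)$ is $1$ if $P$ holds and $0$ otherwise. *)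

theory Defs
  imports Complex_Main
begin

datatype step = North | East

definition pt_x :: "step list \<Rightarrow> nat \<Rightarrow> nat" where
  "pt_x p k = length (filter (\<lambda>s. s = East) (take k p))"
definition pt_y :: "step list \<Rightarrow> nat \<Rightarrow> nat" where
  "pt_y p k = length (filter (\<lambda>s. s = North) (take k p))"

text \<open>(m,n)-Dyck path: ends at (m,n) and stays weakly above y = (n/m) x.
The path is piecewise linear between its lattice vertices, so it suffices to
require this at every vertex.\<close>
definition dyck :: "nat \<Rightarrow> nat \<Rightarrow> step list \<Rightarrow> bool" where
  "dyck m n p \<longleftrightarrow> pt_x p (length p) = m \<and> pt_y p (length p) = n \<and>
     (\<forall>k\<le>length p. real (pt_y p k) \<ge> real n / real m * real (pt_x p k))"

text \<open>Height of the east step in column i (the (i+1)-st east step).\<close>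
definition col_height :: "step list \<Rightarrow> nat \<Rightarrow> nat" where
  "col_height p i = pt_y p (LEAST k. k < length p \<and> p ! k = East \<and> pt_x p k = i)"

text \<open>Cells (i,j) = [i,i+1] x [j,j+1] of [0,m] x [0,n] lying above the path.\<close>
definition cells :: "nat \<Rightarrow> nat \<Rightarrow> step list \<Rightarrow> (nat \<times> nat) set" where
  "cells m n p = {(i, j). i < m \<and> j < n \<and> col_height p i \<le> j}"

definition arm :: "nat \<Rightarrow> nat \<Rightarrow> step list \<Rightarrow> nat \<times> nat \<Rightarrow> nat" where
  "arm m n p c = card {i'. i' > fst c \<and> (i', snd c) \<in> cells m n p}"

definition leg :: "nat \<Rightarrow> nat \<Rightarrow> step list \<Rightarrow> nat \<times> nat \<Rightarrow> nat" where
  "leg m n p c = card {j'. j' < snd c \<and> (fst c, j') \<in> cells m n p}"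

text \<open>pdinv, with the convention x/0 = infinity (so the strict upper bound
holds automatically when leg = 0).\<close>
definition pdinv :: "nat \<Rightarrow> nat \<Rightarrow> step list \<Rightarrow> nat" where
  "pdinv m n p = card {c \<in> cells m n p.
      real (arm m n p c) / real (leg m n p c + 1) \<le> real m / real n \<and>
      (leg m n p c = 0 \<or> real m / real n < real (arm m n p c + 1) / real (leg m n p c))}"

definition rat_diag :: "nat \<Rightarrow> nat \<Rightarrow> nat \<Rightarrow> nat \<Rightarrow> (real \<times> real) set" where
  "rat_diag m n a b = {(u, v). u < real a \<and>
      real m * real b - real n * real a < real m * v - real n * u \<and>
      real m * v - real n * u \<le> real m * (real b + 1) - real n * real a}"

definition east_seg :: "nat \<Rightarrow> nat \<Rightarrow> (real \<times> real) set" where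
  "east_seg a b = {(real a + t, real b) | t. 0 \<le> t \<and> t \<le> 1}"

end

theory Submission
  imports Defs
begin

text \<open>
  An east step at \<open>(x, y)\<close> that precedes a north step at \<open>(a, b)\<close> determines the cell
  \<open>(x, b)\<close> of \<open>\<lambda>(\<Pi>)\<close>; every cell arises from exactly one such pair, with arm
  \<open>a - x - 1\<close> and leg \<open>b - y\<close>. An east step after the north step lies weakly to its right
  and misses the diagonal. For an east step before it, \<open>m v - n u\<close> decreases by \<open>n\<close> along
  the segment, so the segment meets the diagonal iff \<open>m (b - y) < n (a - x) \<le> m (b - y + 1) + n\<close>,
  which is the pdinv condition of the cell with denominators cleared. Only the endpoint
  \<open>(m, n)\<close> of the path is used, not the Dyck condition.
\<close>

lemma count_list_take_Suc:
  "count_list (take (Suc k) xs) x =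
     count_list (take k xs) x + (if k < length xs \<and> xs ! k = x then 1 else 0)"
  by (cases "k < length xs") (auto simp: take_Suc_conv_app_nth)

lemma count_list_take_mono: "k \<le> k' \<Longrightarrow> count_list (take k xs) x \<le> count_list (take k' xs) x"
  by (induction k' rule: dec_induct) (auto simp: count_list_take_Suc)

lemma count_list_take_strict_mono:
  assumes "l < k" "l < length xs" "xs ! l = x"
  shows "count_list (take l xs) x < count_list (take k xs) x"
  using count_list_take_mono[of "Suc l" k xs x] assms by (simp add: count_list_take_Suc)

lemma ex_nth_count_list_take_eq:
  "i < count_list (take k xs) x \<Longrightarrow> \<exists>l<k. l < length xs \<and> xs ! l = x \<and> count_list (take l xs) x = i"
proof (induction k)
  case (Suc k)
  then show ?case
    by (cases "i < count_list (take k xs) x")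
       (auto simp: count_list_take_Suc less_Suc_eq split: if_splits)
qed simp

lemma pt_x_eq_count_list: "pt_x p k = count_list (take k p) East"
  unfolding pt_x_def count_list_eq_length_filter by (metis (mono_tags))

lemma pt_y_eq_count_list: "pt_y p k = count_list (take k p) North"
  unfolding pt_y_def count_list_eq_length_filter by (metis (mono_tags))

lemmas pt_x_mono = count_list_take_mono[where x = East, folded pt_x_eq_count_list]
lemmas pt_y_mono = count_list_take_mono[where x = North, folded pt_y_eq_count_list]
lemmas pt_x_strict_mono = count_list_take_strict_mono[where x = East, folded pt_x_eq_count_list]
lemmas pt_y_strict_mono = count_list_take_strict_mono[where x = North, folded pt_y_eq_count_list]
lemmas ex_East_step_at = ex_nth_count_list_take_eq[where x = East, folded pt_x_eq_count_list]
lemmas ex_North_step_at = ex_nth_count_list_take_eq[where x = North, folded pt_y_eq_count_list]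

lemma inj_on_pt_x_East: "inj_on (pt_x p) {l. l < length p \<and> p ! l = East}"
proof (rule inj_onI)
  fix i j assume "i \<in> {l. l < length p \<and> p ! l = East}" "j \<in> {l. l < length p \<and> p ! l = East}"
    and "pt_x p i = pt_x p j"
  then show "i = j"
    using pt_x_strict_mono[of i j p] pt_x_strict_mono[of j i p] by (cases i j rule: linorder_cases) auto
qed

lemma inj_on_pt_y_North: "inj_on (pt_y p) {k. k < length p \<and> p ! k = North}"
proof (rule inj_onI)
  fix i j assume "i \<in> {k. k < length p \<and> p ! k = North}" "j \<in> {k. k < length p \<and> p ! k = North}"
    and "pt_y p i = pt_y p j"
  then show "i = j"
    using pt_y_strict_mono[of i j p] pt_y_strict_mono[of j i p] by (cases i j rule: linorder_cases) auto
qed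

lemma East_before_North_iff:
  assumes "k < length p" "p ! k = North" "l < length p" "p ! l = East"
  shows "l < k \<longleftrightarrow> pt_x p l < pt_x p k" and "l < k \<longleftrightarrow> pt_y p l \<le> pt_y p k"
proof -
  have "k \<noteq> l" using assms by auto
  have before: "pt_x p l < pt_x p k \<and> pt_y p l \<le> pt_y p k" if "l < k"
    using that assms pt_x_strict_mono[of l k p] pt_y_mono[of l k p] by simp
  have after: "pt_x p k \<le> pt_x p l \<and> pt_y p k < pt_y p l" if "k < l"
    using that assms pt_x_mono[of k l p] pt_y_strict_mono[of k l p] by simp
  show "l < k \<longleftrightarrow> pt_x p l < pt_x p k" "l < k \<longleftrightarrow> pt_y p l \<le> pt_y p k"
    using before after \<open>k \<noteq> l\<close> by (meson leD linorder_neqE_nat)+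
qed

lemma col_height_East:
  assumes "l < length p" "p ! l = East"
  shows "col_height p (pt_x p l) = pt_y p l"
proof -
  have "(LEAST k. k < length p \<and> p ! k = East \<and> pt_x p k = pt_x p l) = l"
  proof (rule Least_equality)
    fix y assume "y < length p \<and> p ! y = East \<and> pt_x p y = pt_x p l"
    then show "l \<le> y" using pt_x_strict_mono[of y l p] by (metis leI less_irrefl)
  qed (use assms in simp)
  then show ?thesis by (simp add: col_height_def)
qed

lemma col_height_le_North_iff:
  assumes "k < length p" "p ! k = North" "i < pt_x p (length p)"
  shows "col_height p i \<le> pt_y p k \<longleftrightarrow> i < pt_x p k"
proof -
  obtain l where l: "l < length p" "p ! l = East" "pt_x p l = i"
    using ex_East_step_at[OF assms(3)] by blast
  show ?thesis
    using East_before_North_iff[OF assms(1,2) l(1,2)] col_height_East[OF l(1,2)] l(3) by simp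
qed

definition east_before_north :: "step list \<Rightarrow> (nat \<times> nat) set" where
  "east_before_north p =
     {(k, l). k < length p \<and> l < length p \<and> p ! k = North \<and> p ! l = East \<and> l < k}"

definition cell_of :: "step list \<Rightarrow> nat \<times> nat \<Rightarrow> nat \<times> nat" where
  "cell_of p = (\<lambda>(k, l). (pt_x p l, pt_y p k))"

definition dinv_cell :: "nat \<Rightarrow> nat \<Rightarrow> step list \<Rightarrow> nat \<times> nat \<Rightarrow> bool" where
  "dinv_cell m n p c \<longleftrightarrow>
     real (arm m n p c) / real (leg m n p c + 1) \<le> real m / real n \<and>
     (leg m n p c = 0 \<or> real m / real n < real (arm m n p c + 1) / real (leg m n p c))"

lemma pdinv_eq_card_dinv_cell: "pdinv m n p = card {c \<in> cells m n p. dinv_cell m n p c}"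
  by (simp add: pdinv_def dinv_cell_def)

lemma bij_betw_cell_of:
  assumes "pt_x p (length p) = m" "pt_y p (length p) = n"
  shows "bij_betw (cell_of p) (east_before_north p) (cells m n p)"
proof (rule bij_betw_imageI)
  show "inj_on (cell_of p) (east_before_north p)"
  proof (rule inj_onI)
    fix u v assume uv: "u \<in> east_before_north p" "v \<in> east_before_north p"
      "cell_of p u = cell_of p v"
    obtain k l k' l' where u: "u = (k, l)" and v: "v = (k', l')"
      by fastforce
    have "l = l'" "k = k'"
      using uv inj_onD[OF inj_on_pt_x_East[of p], of l l'] inj_onD[OF inj_on_pt_y_North[of p], of k k']
      by (auto simp: u v east_before_north_def cell_of_def)
    then show "u = v" by (simp add: u v)
  qed
  show "cell_of p ` east_before_north p = cells m n p"
  proof (intro set_eqI iffI)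
    fix c assume "c \<in> cell_of p ` east_before_north p"
    then obtain k l where kl: "k < length p" "p ! k = North" "l < length p" "p ! l = East" "l < k"
      and c: "c = (pt_x p l, pt_y p k)"
      by (auto simp: east_before_north_def cell_of_def)
    have "pt_x p l < pt_x p k" "pt_y p l \<le> pt_y p k"
      using East_before_North_iff[OF kl(1-4)] kl(5) by auto
    moreover have "pt_x p k \<le> m" "pt_y p k < n"
      using assms pt_x_mono[of k "length p" p] pt_y_strict_mono[of k "length p" p] kl by auto
    ultimately show "c \<in> cells m n p"
      using c col_height_East[OF kl(3,4)] by (simp add: cells_def)
  next
    fix c assume "c \<in> cells m n p"
    then obtain i j where c: "c = (i, j)" "i < m" "j < n" "col_height p i \<le> j"
      by (auto simp: cells_def)
    obtain l where l: "l < length p" "p ! l = East" "pt_x p l = i"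
      using ex_East_step_at[of i p "length p"] c assms by auto
    obtain k where k: "k < length p" "p ! k = North" "pt_y p k = j"
      using ex_North_step_at[of j p "length p"] c assms by auto
    have "l < k"
      using East_before_North_iff(2)[OF k(1,2) l(1,2)] col_height_East[OF l(1,2)] c l k by simp
    then show "c \<in> cell_of p ` east_before_north p"
      using c k l by (force simp: east_before_north_def cell_of_def)
  qed
qed

lemma arm_leg_cell_of:
  assumes "pt_x p (length p) = m" "pt_y p (length p) = n" "(k, l) \<in> east_before_north p"
  shows "arm m n p (cell_of p (k, l)) = pt_x p k - pt_x p l - 1"
    and "leg m n p (cell_of p (k, l)) = pt_y p k - pt_y p l"
proof -
  have kl: "k < length p" "p ! k = North" "l < length p" "p ! l = East" "l < k"
    using assms(3) by (auto simp: east_before_north_def)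
  have "pt_x p k \<le> m" "pt_y p k < n"
    using assms pt_x_mono[of k "length p" p] pt_y_strict_mono[of k "length p" p] kl by auto
  then have "{i. pt_x p l < i \<and> (i, pt_y p k) \<in> cells m n p} = {pt_x p l<..<pt_x p k}"
    using col_height_le_North_iff[OF kl(1,2)] assms(1) by (fastforce simp: cells_def)
  then show "arm m n p (cell_of p (k, l)) = pt_x p k - pt_x p l - 1"
    by (simp add: arm_def cell_of_def)
  have "pt_x p l < pt_x p k"
    using East_before_North_iff(1)[OF kl(1-4)] kl(5) by simp
  with \<open>pt_x p k \<le> m\<close> \<open>pt_y p k < n\<close>
  have "{j. j < pt_y p k \<and> (pt_x p l, j) \<in> cells m n p} = {pt_y p l..<pt_y p k}"
    using col_height_East[OF kl(3,4)] by (auto simp: cells_def)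
  then show "leg m n p (cell_of p (k, l)) = pt_y p k - pt_y p l"
    by (simp add: leg_def cell_of_def)
qed

lemma east_seg_rat_diag_disjoint: "a \<le> x \<Longrightarrow> east_seg x y \<inter> rat_diag m n a b = {}"
  by (auto simp: east_seg_def rat_diag_def)

lemma east_seg_meets_rat_diag_iff:
  assumes "0 < m" "0 < n" "y \<le> b"
  shows "east_seg x y \<inter> rat_diag m n a b \<noteq> {} \<longleftrightarrow>
           real m * (real b - real y) < real n * (real a - real x) \<and>
           real n * (real a - real x - 1) \<le> real m * (real b - real y + 1)"
proof -
  define lo where "lo = real m * real b - real n * real a"
  \<comment> \<open>\<open>g t\<close> is \<open>m v - n u\<close> at the point \<open>(x + t, y)\<close> of the segment\<close>
  define g where "g t = real m * real y - real n * (real x + t)" for t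
  have left_of_a: "real x + t < real a" if "lo < g t" for t
  proof -
    have "real m * real y \<le> real m * real b"
      using assms(3) by (simp add: mult_left_mono)
    then have "real n * (real x + t) < real n * real a"
      using that by (simp add: lo_def g_def)
    then show ?thesis using assms(2) by simp
  qed
  have "east_seg x y \<inter> rat_diag m n a b \<noteq> {} \<longleftrightarrow>
          (\<exists>t. 0 \<le> t \<and> t \<le> 1 \<and> lo < g t \<and> g t \<le> lo + real m)"
    using left_of_a by (fastforce simp: east_seg_def rat_diag_def lo_def g_def algebra_simps)
  also have "\<dots> \<longleftrightarrow> lo < g 0 \<and> g 1 \<le> lo + real m"
  proof
    assume "\<exists>t. 0 \<le> t \<and> t \<le> 1 \<and> lo < g t \<and> g t \<le> lo + real m"
    then obtain t where t: "0 \<le> t" "t \<le> 1" "lo < g t" "g t \<le> lo + real m"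
      by blast
    then have "g 1 \<le> g t" "g t \<le> g 0"
      by (simp_all add: g_def mult_left_mono)
    with t show "lo < g 0 \<and> g 1 \<le> lo + real m" by linarith
  next
    assume h: "lo < g 0 \<and> g 1 \<le> lo + real m"
    show "\<exists>t. 0 \<le> t \<and> t \<le> 1 \<and> lo < g t \<and> g t \<le> lo + real m"
    proof (cases "g 0 \<le> lo + real m")
      case True
      with h show ?thesis by (intro exI[of _ 0]) simp
    next
      case False
      \<comment> \<open>the point where the segment crosses the upper line\<close>
      define t where "t = (g 0 - lo - real m) / real n"
      have "real n * t = g 0 - lo - real m"
        using assms(2) by (simp add: t_def)
      then have "g t = lo + real m"
        by (simp add: g_def distrib_left)
      moreover have "0 \<le> t" "t \<le> 1"
        using False h assms(2) by (simp_all add: t_def g_def field_simps)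
      ultimately show ?thesis using assms(1) by (intro exI[of _ t]) simp
    qed
  qed
  also have "\<dots> \<longleftrightarrow> real m * (real b - real y) < real n * (real a - real x) \<and>
                     real n * (real a - real x - 1) \<le> real m * (real b - real y + 1)"
    by (auto simp: lo_def g_def algebra_simps)
  finally show ?thesis .
qed

lemma pdinv_condition_iff:
  fixes A L :: nat
  assumes "0 < m" "0 < n"
  shows "(real A / real (L + 1) \<le> real m / real n \<and>
           (L = 0 \<or> real m / real n < real (A + 1) / real L)) \<longleftrightarrow>
         real n * real A \<le> real m * (real L + 1) \<and> real m * real L < real n * (real A + 1)"
proof -
  have "0 < real n * (real A + 1)"
    using assms by simp
  then show ?thesis
    using assms by (cases "L = 0") (auto simp: divide_simps algebra_simps)
qed

lemma east_seg_meets_rat_diag_iff_dinv_cell: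
  assumes "0 < m" "0 < n" "pt_x p (length p) = m" "pt_y p (length p) = n"
    and kl: "k < length p" "p ! k = North" "l < length p" "p ! l = East"
  shows "east_seg (pt_x p l) (pt_y p l) \<inter> rat_diag m n (pt_x p k) (pt_y p k) \<noteq> {} \<longleftrightarrow>
           (k, l) \<in> east_before_north p \<and> dinv_cell m n p (cell_of p (k, l))"
proof (cases "l < k")
  case False
  then show ?thesis
    using East_before_North_iff(1)[OF kl] east_seg_rat_diag_disjoint
    by (auto simp: east_before_north_def)
next
  case True
  then have ebn: "(k, l) \<in> east_before_north p"
    and x_less: "pt_x p l < pt_x p k" and y_le: "pt_y p l \<le> pt_y p k"
    using kl East_before_North_iff[OF kl] by (auto simp: east_before_north_def)
  have diffs: "real (pt_x p k - pt_x p l - 1) = real (pt_x p k) - real (pt_x p l) - 1"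
    "real (pt_y p k - pt_y p l) = real (pt_y p k) - real (pt_y p l)"
    using x_less y_le by (simp_all add: of_nat_diff)
  show ?thesis
    unfolding east_seg_meets_rat_diag_iff[OF assms(1,2) y_le] dinv_cell_def
      arm_leg_cell_of[OF assms(3,4) ebn] pdinv_condition_iff[OF assms(1,2)]
    unfolding diffs
    using ebn by (auto simp: algebra_simps)
qed

theorem theorem1:
  fixes m n :: nat and p :: "step list"
  assumes "m > 0" and "n > 0" and "dyck m n p"
  shows "pdinv m n p = card {(k, l). k < length p \<and> l < length p \<and>
            p ! k = North \<and> p ! l = East \<and>
            east_seg (pt_x p l) (pt_y p l) \<inter> rat_diag m n (pt_x p k) (pt_y p k) \<noteq> {}}"
proof -
  have ends: "pt_x p (length p) = m" "pt_y p (length p) = n"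
    using assms(3) by (auto simp: dyck_def)
  have "bij_betw (cell_of p) {kl \<in> east_before_north p. dinv_cell m n p (cell_of p kl)}
          {c \<in> cells m n p. dinv_cell m n p c}"
    by (rule bij_betw_Collect[OF bij_betw_cell_of[OF ends]]) simp
  then have "pdinv m n p = card {kl \<in> east_before_north p. dinv_cell m n p (cell_of p kl)}"
    by (simp add: pdinv_eq_card_dinv_cell bij_betw_same_card)
  also have "{kl \<in> east_before_north p. dinv_cell m n p (cell_of p kl)} =
      {(k, l). k < length p \<and> l < length p \<and> p ! k = North \<and> p ! l = East \<and>
        east_seg (pt_x p l) (pt_y p l) \<inter> rat_diag m n (pt_x p k) (pt_y p k) \<noteq> {}}"
    using east_seg_meets_rat_diag_iff_dinv_cell[OF assms(1,2) ends]
    by (auto simp: east_before_north_def)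
  finally show ?thesis .
qed

end
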